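(* Let $(X,\|\cdot,\cdot\|)$ be a $2$-normed space, $E\subseteq X$, and $f:E\to X$. If $f$ is statistically ward continuous on $E$, then $f$ is sequentially continuous on $E$: for every $x_0\in E$ and every sequence $(x_n)$ in $E$ converging to $x_0$, $(f(x_n))$ converges to $f(x_0)$.
   Context: A $2$-normed space is a real linear space $X$ with $\dim X>1$ together with a function $\|\cdot,\cdot\|:X^2\to\mathbb{R}$ such that for all $x,y,z\in X$, $\alpha\in\mathbb{R}$: (1) $\|x,y\|=0$ iff $x,y$ are linearly dependent; (2) $\|x,y\|=\|y,x\|$; (3) $\|\alpha x,y\|=|\alpha|\|x,y\|$; (4) $\|x,y+z\|\le\|x,y\|+\|x,z\|$. A sequence $(x_n)$ in $X$ converges to $x\in X$ if $\lim_{n\to\infty}\|x_n-x,z\|=0$ for every $z\in X$. For a sequence $(x_k)$ write $\Delta x_k=x_{k+1}-x_k$. A sequence $(x_k)$ in $X$ is statistically quasi-Cauchy if for every $\epsilon>0$ and every $z\in X$, $\lim_{n\to\infty}\frac1n|\{k\le n:\|\Delta x_k,z\|\ge\epsilon\}|=0$. A function $f:E\to X$ is statistically ward continuous on $E$ if $(f(x_k))$ is statistically quasi-Cauchy whenever $(x_k)$ is a statistically quasi-Cauchy sequence of points of $E$. *)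

theory Defs
  imports "HOL-Analysis.Analysis"
begin

definition lin_dep2 :: "'a::real_vector \<Rightarrow> 'a \<Rightarrow> bool" where
  "lin_dep2 x y \<longleftrightarrow> (\<exists>a b::real. (a \<noteq> 0 \<or> b \<noteq> 0) \<and> a *\<^sub>R x + b *\<^sub>R y = 0)"

definition two_normed :: "('a::real_vector \<Rightarrow> 'a \<Rightarrow> real) \<Rightarrow> bool" where
  "two_normed N \<longleftrightarrow>
     (\<exists>x y::'a. \<not> lin_dep2 x y) \<and>
     (\<forall>x y. N x y = 0 \<longleftrightarrow> lin_dep2 x y) \<and>
     (\<forall>x y. N x y = N y x) \<and>
     (\<forall>x y (\<alpha>::real). N (\<alpha> *\<^sub>R x) y = \<bar>\<alpha>\<bar> * N x y) \<and>
     (\<forall>x y z. N x (y + z) \<le> N x y + N x z)"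

definition tn_converges :: "('a::real_vector \<Rightarrow> 'a \<Rightarrow> real) \<Rightarrow> (nat \<Rightarrow> 'a) \<Rightarrow> 'a \<Rightarrow> bool" where
  "tn_converges N xs x \<longleftrightarrow> (\<forall>z. (\<lambda>n. N (xs n - x) z) \<longlonglongrightarrow> 0)"

definition stat_quasi_cauchy :: "('a::real_vector \<Rightarrow> 'a \<Rightarrow> real) \<Rightarrow> (nat \<Rightarrow> 'a) \<Rightarrow> bool" where
  "stat_quasi_cauchy N xs \<longleftrightarrow>
     (\<forall>\<epsilon>>0. \<forall>z. (\<lambda>n. real (card {k. k \<le> n \<and> N (xs (Suc k) - xs k) z \<ge> \<epsilon>}) / real n)
                    \<longlonglongrightarrow> 0)"

definition stat_ward_continuous :: "('a::real_vector \<Rightarrow> 'a \<Rightarrow> real) \<Rightarrow> 'a set \<Rightarrow> ('a \<Rightarrow> 'a) \<Rightarrow> bool" where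
  "stat_ward_continuous N E f \<longleftrightarrow>
     (\<forall>xs. (\<forall>k. xs k \<in> E) \<longrightarrow> stat_quasi_cauchy N xs \<longrightarrow> stat_quasi_cauchy N (\<lambda>k. f (xs k)))"

end

theory Submission
  imports Defs "HOL-Library.Infinite_Set"
begin

(* Suppose x_n -> x0 in E but f(x_n) does not converge to f(x0).  Then for some
   z and some eps > 0 there is a subsequence g = x o r with
   ||f(g j) - f(x0), z|| >= eps for all j.  Interleave x0 with g:
     y = (x0, g 0, x0, g 1, x0, g 2, ...).
   Every jump ||y(k+1) - y(k), z|| equals ||g(k div 2) - x0, z||, which tends
   to 0, so only finitely many jumps are large and y is statistically
   quasi-Cauchy.  By hypothesis so is f o y, which is the interleaving of f(x0)
   with f o g; but now every jump is at least eps, so the relative frequency of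
   large jumps tends to 1, not 0 -- a contradiction. *)

lemma two_norm_uminus:
  assumes "two_normed N" shows "N (- v) z = N v z"
proof -
  have "N ((-1::real) *\<^sub>R v) z = \<bar>-1::real\<bar> * N v z"
    using assms unfolding two_normed_def by blast
  thus ?thesis by simp
qed

(* A 2-norm is nonnegative: 0 = N x (y - y) \<le> N x y + N x (- y) = 2 N x y. *)
lemma two_norm_nonneg:
  assumes "two_normed N" shows "0 \<le> N x y"
proof -
  have sym: "\<And>a b. N a b = N b a" using assms unfolding two_normed_def by blast
  have "N x 0 = 0" using assms unfolding two_normed_def lin_dep2_def
    by (metis scale_zero_left scale_zero_right add_0)
  moreover have "N x (y + - y) \<le> N x y + N x (- y)"
    using assms unfolding two_normed_def by blast
  moreover have "N x (- y) = N x y"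
    using two_norm_uminus[OF assms] sym by metis
  ultimately show ?thesis by simp
qed

lemma tn_converges_subseq:
  assumes "tn_converges N u c" and "strict_mono r"
  shows "tn_converges N (\<lambda>j. u (r j)) c"
  using assms LIMSEQ_subseq_LIMSEQ unfolding tn_converges_def o_def by blast

lemma not_tn_converges_subseq:
  assumes "two_normed N" and "\<not> tn_converges N u c"
  obtains z \<epsilon> and r :: "nat \<Rightarrow> nat" where "\<epsilon> > 0" "strict_mono r" "\<And>j. N (u (r j) - c) z \<ge> \<epsilon>"
proof -
  obtain z where "\<not> (\<lambda>n. N (u n - c) z) \<longlonglongrightarrow> 0"
    using assms(2) unfolding tn_converges_def by blast
  then obtain \<epsilon> where e: "\<epsilon> > 0"
    and "\<not> eventually (\<lambda>n. N (u n - c) z < \<epsilon>) sequentially"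
    using two_norm_nonneg[OF assms(1)] by (auto simp: tendsto_iff dist_real_def)
  then have "frequently (\<lambda>n. N (u n - c) z \<ge> \<epsilon>) sequentially"
    by (simp add: frequently_def not_le)
  then have inf: "infinite {n. N (u n - c) z \<ge> \<epsilon>}"
    by (simp add: frequently_cofinite cofinite_eq_sequentially[symmetric])
  show thesis
  proof (rule that[OF e strict_mono_enumerate[OF inf]])
    show "N (u (enumerate {n. N (u n - c) z \<ge> \<epsilon>} j) - c) z \<ge> \<epsilon>" for j
      using enumerate_in_set[OF inf] by blast
  qed
qed

lemma density_zero_if_finite:
  fixes P :: "nat \<Rightarrow> bool"
  assumes "finite {k. P k}"
  shows "(\<lambda>n. real (card {k. k \<le> n \<and> P k}) / real n) \<longlonglongrightarrow> 0"
proof (rule tendsto_sandwich[OF _ _ tendsto_const])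
  let ?C = "card {k. P k}"
  have "card {k. k \<le> n \<and> P k} \<le> ?C" for n
    by (intro card_mono[OF assms]) auto
  then show "\<forall>\<^sub>F n in sequentially. real (card {k. k \<le> n \<and> P k}) / real n \<le> real ?C / real n"
    by (intro always_eventually allI divide_right_mono) auto
  show "(\<lambda>n. real ?C / real n) \<longlonglongrightarrow> 0"
    by (intro tendsto_divide_0[OF tendsto_const] filterlim_at_top_imp_at_infinity
        filterlim_real_sequentially)
qed simp

definition interleave :: "'a \<Rightarrow> (nat \<Rightarrow> 'a) \<Rightarrow> nat \<Rightarrow> 'a" where
  "interleave c g k = (if even k then c else g (k div 2))"

lemma interleave_in:
  assumes "c \<in> E" and "\<And>j. g j \<in> E" shows "interleave c g k \<in> E"
  using assms by (simp add: interleave_def)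

lemma interleave_comp:
  "(\<lambda>k. f (interleave c g k)) = interleave (f c) (\<lambda>j. f (g j))"
  by (auto simp: interleave_def)

lemma interleave_jump:
  assumes "two_normed N"
  shows "N (interleave c g (Suc k) - interleave c g k) z = N (g (k div 2) - c) z"
proof (cases "even k")
  case True
  then have "Suc k div 2 = k div 2" by presburger
  with True show ?thesis by (simp add: interleave_def)
next
  case False
  then have "interleave c g (Suc k) - interleave c g k = - (g (k div 2) - c)"
    by (simp add: interleave_def)
  then show ?thesis by (simp only: two_norm_uminus[OF assms])
qed

(* Interleaving c with a sequence converging to c is statistically quasi-Cauchy:
   for each eps only finitely many jumps are \<ge> eps. *)
lemma interleave_stat_quasi_cauchy:
  assumes tn: "two_normed N" and conv: "tn_converges N g c"
  shows "stat_quasi_cauchy N (interleave c g)"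
  unfolding stat_quasi_cauchy_def
proof (intro allI impI)
  fix \<epsilon> :: real and z assume e: "\<epsilon> > 0"
  obtain M where M: "\<And>j. j \<ge> M \<Longrightarrow> N (g j - c) z < \<epsilon>"
    using order_tendstoD(2)[OF conv[unfolded tn_converges_def, rule_format, of z] e]
    by (auto simp: eventually_sequentially)
  have "k < 2*M" if "N (interleave c g (Suc k) - interleave c g k) z \<ge> \<epsilon>" for k
  proof -
    have "\<not> N (g (k div 2) - c) z < \<epsilon>" using that by (simp add: interleave_jump[OF tn])
    then have "k div 2 < M" using M[of "k div 2"] by linarith
    then show ?thesis by linarith
  qed
  then have "{k. N (interleave c g (Suc k) - interleave c g k) z \<ge> \<epsilon>} \<subseteq> {..<2*M}"
    by blast
  then have "finite {k. N (interleave c g (Suc k) - interleave c g k) z \<ge> \<epsilon>}"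
    using finite_subset by blast
  then show "(\<lambda>n. real (card {k. k \<le> n \<and>
      N (interleave c g (Suc k) - interleave c g k) z \<ge> \<epsilon>}) / real n) \<longlonglongrightarrow> 0"
    by (rule density_zero_if_finite)
qed

(* If g stays eps away from c in direction z, every jump of the interleaving is
   large, so the relative frequency of large jumps is (n+1)/n \<longrightarrow> 1, not 0. *)
lemma interleave_not_stat_quasi_cauchy:
  assumes tn: "two_normed N" and e: "\<epsilon> > 0" and far: "\<And>j. N (g j - c) z \<ge> \<epsilon>"
  shows "\<not> stat_quasi_cauchy N (interleave c g)"
proof
  assume "stat_quasi_cauchy N (interleave c g)"
  then have "(\<lambda>n. real (card {k. k \<le> n \<and>
      N (interleave c g (Suc k) - interleave c g k) z \<ge> \<epsilon>}) / real n) \<longlonglongrightarrow> 0"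
    using e unfolding stat_quasi_cauchy_def by blast
  moreover have "{k. k \<le> n \<and> N (interleave c g (Suc k) - interleave c g k) z \<ge> \<epsilon>} = {..n}" for n
    using far by (auto simp: interleave_jump[OF tn])
  ultimately have "(\<lambda>n. real (Suc n) / real n) \<longlonglongrightarrow> 0" by simp
  moreover have "(\<lambda>n. real (Suc n) / real n) \<longlonglongrightarrow> 1"
    using LIMSEQ_Suc_n_over_n by simp
  ultimately show False using LIMSEQ_unique by fastforce
qed

theorem corollary3p1:
  fixes N :: "'a::real_vector \<Rightarrow> 'a \<Rightarrow> real" and E :: "'a set" and f :: "'a \<Rightarrow> 'a"
  assumes "two_normed N"
    and "stat_ward_continuous N E f"
  shows "\<forall>x0 \<in> E. \<forall>xs. (\<forall>n. xs n \<in> E) \<longrightarrow> tn_converges N xs x0 \<longrightarrow>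
           tn_converges N (\<lambda>n. f (xs n)) (f x0)"
proof (intro ballI allI impI)
  fix x0 xs assume x0: "x0 \<in> E" and xsE: "\<forall>n. xs n \<in> E" and conv: "tn_converges N xs x0"
  show "tn_converges N (\<lambda>n. f (xs n)) (f x0)"
  proof (rule ccontr)
    assume "\<not> tn_converges N (\<lambda>n. f (xs n)) (f x0)"
    with not_tn_converges_subseq[OF assms(1)]
    obtain z \<epsilon> and r :: "nat \<Rightarrow> nat" where e: "\<epsilon> > 0" and r: "strict_mono r"
      and far: "\<And>j. N (f (xs (r j)) - f x0) z \<ge> \<epsilon>"
      by metis
    let ?y = "interleave x0 (\<lambda>j. xs (r j))"
    have "stat_quasi_cauchy N ?y"
      using interleave_stat_quasi_cauchy[OF assms(1) tn_converges_subseq[OF conv r]] .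
    moreover have "\<forall>k. ?y k \<in> E" using interleave_in[of x0 E] x0 xsE by simp
    ultimately have "stat_quasi_cauchy N (\<lambda>k. f (?y k))"
      using assms(2) unfolding stat_ward_continuous_def by blast
    then show False
      using interleave_not_stat_quasi_cauchy[OF assms(1) e far]
      by (simp add: interleave_comp)
  qed
qed

end
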